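(* Let $V$ be a real vector space, let $F$ be a geometric mean closed (Archimedean) vector lattice, let $u\in F^+$, and let $T\colon V\times V\to F$ be a vector semi-inner product. Define $\|x\|^T_u:=T(x,x)\boxtimes u$ for $x\in V$. Then $\|\cdot\|^T_u\colon V\to F$ is a vector seminorm, i.e. (a) $\|x\|^T_u\in F^+$ for all $x\in V$; (b) $\|\alpha x\|^T_u=|\alpha|\,\|x\|^T_u$ for all $x\in V$ and $\alpha\in\mathbb{R}$; (c) $\|x+y\|^T_u\le \|x\|^T_u+\|y\|^T_u$ for all $x,y\in V$.
   Context: All vector spaces are over $\mathbb{R}$ and all vector lattices are Archimedean. For a vector lattice $F$, $F^+=\{x\in F: x\ge 0\}$. A vector lattice $F$ is geometric mean closed if $\inf\{\theta u+\theta^{-1}v:\theta\in(0,\infty)\}$ exists in $F$ for all $u,v\in F^+$; in that case $u\boxtimes v:=2^{-1}\inf\{\theta u+\theta^{-1}v:\theta\in(0,\infty)\}$ for $u,v\in F^+$. A map $T\colon V\times V\to F$ is a vector semi-inner product if it is bilinear ($T(x+y,z)=T(x,z)+T(y,z)$, $T(x,y+z)=T(x,y)+T(x,z)$, $\lambda T(x,y)=T(\lambda x,y)=T(x,\lambda y)$ for all $x,y,z\in V$, $\lambda\in\mathbb{R}$), symmetric ($T(x,y)=T(y,x)$), and satisfies $T(x,x)\ge 0$ for all $x\in V$. *)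

theory Defs
  imports Main "HOL-Analysis.Analysis"
begin

definition archimedean_vl :: "('f::{ordered_real_vector, lattice}) itself \<Rightarrow> bool" where
  "archimedean_vl _ \<longleftrightarrow>
     (\<forall>u v :: 'f. 0 \<le> u \<and> 0 \<le> v \<and> (\<forall>n::nat. real n *\<^sub>R u \<le> v) \<longrightarrow> u = 0)"

definition is_infimum :: "'f::order set \<Rightarrow> 'f \<Rightarrow> bool" where
  "is_infimum S a \<longleftrightarrow> (\<forall>x\<in>S. a \<le> x) \<and> (\<forall>b. (\<forall>x\<in>S. b \<le> x) \<longrightarrow> b \<le> a)"

definition gm_set :: "'f::real_vector \<Rightarrow> 'f \<Rightarrow> 'f set" where
  "gm_set u v = {\<theta> *\<^sub>R u + inverse \<theta> *\<^sub>R v | \<theta>::real. 0 < \<theta>}"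

definition geometric_mean_closed :: "('f::{ordered_real_vector, lattice}) itself \<Rightarrow> bool" where
  "geometric_mean_closed _ \<longleftrightarrow>
     (\<forall>u v :: 'f. 0 \<le> u \<and> 0 \<le> v \<longrightarrow> (\<exists>a. is_infimum (gm_set u v) a))"

definition gmean :: "'f::{ordered_real_vector, lattice} \<Rightarrow> 'f \<Rightarrow> 'f" (infixl "\<boxtimes>" 70) where
  "u \<boxtimes> v = inverse 2 *\<^sub>R (THE a. is_infimum (gm_set u v) a)"

definition vector_semi_inner_product ::
  "('v::real_vector \<Rightarrow> 'v \<Rightarrow> 'f::{ordered_real_vector, lattice}) \<Rightarrow> bool" where
  "vector_semi_inner_product T \<longleftrightarrow>
     (\<forall>x y z. T (x + y) z = T x z + T y z) \<and>
     (\<forall>x y z. T x (y + z) = T x y + T x z) \<and>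
     (\<forall>x y (c::real). c *\<^sub>R T x y = T (c *\<^sub>R x) y \<and> c *\<^sub>R T x y = T x (c *\<^sub>R y)) \<and>
     (\<forall>x y. T x y = T y x) \<and>
     (\<forall>x. 0 \<le> T x x)"

end

theory Submission
  imports Defs
begin

text \<open>Homogeneity holds because the family \<open>\<theta> (c\<^sup>2 a) + \<theta>\<^sup>-\<^sup>1 u\<close> is a
  reparametrisation of \<open>c (\<theta> a + \<theta>\<^sup>-\<^sup>1 u)\<close>; the degenerate case
  \<open>0 \<boxtimes> u = 0\<close> is the Archimedean property. For the triangle inequality
  put \<open>A = T(x,x)\<close>, \<open>B = T(y,y)\<close>, \<open>C = T(x,y)\<close>; given \<open>s, t > 0\<close> and \<open>p = st/(s+t)\<close>,
  positivity of \<open>T(sx - ty, sx - ty) = s\<^sup>2A + t\<^sup>2B - 2stC\<close> yields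
  \<open>p(A + B + 2C) + p\<^sup>-\<^sup>1u \<le> (sA + s\<^sup>-\<^sup>1u) + (tB + t\<^sup>-\<^sup>1u)\<close>, and taking infima over \<open>s\<close>
  and \<open>t\<close> gives \<open>(A + B + 2C) \<boxtimes> u \<le> A \<boxtimes> u + B \<boxtimes> u\<close>.\<close>

lemma is_infimum_unique:
  fixes S :: "'a::order set"
  assumes "is_infimum S a" "is_infimum S b"
  shows "a = b"
  using assms unfolding is_infimum_def by (meson order.antisym)

lemma is_infimum_scaleR:
  fixes S :: "'a::ordered_real_vector set"
  assumes inf: "is_infimum S g" and c: "0 < c"
  shows "is_infimum (scaleR c ` S) (c *\<^sub>R g)"
  unfolding is_infimum_def
proof (intro conjI allI impI ballI)
  fix y assume "y \<in> scaleR c ` S"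
  then obtain x where "x \<in> S" "y = c *\<^sub>R x" by blast
  then show "c *\<^sub>R g \<le> y"
    using inf c unfolding is_infimum_def by (simp add: scaleR_left_mono)
next
  fix b assume "\<forall>y\<in>scaleR c ` S. b \<le> y"
  then have "inverse c *\<^sub>R b \<le> x" if "x \<in> S" for x
    using that c scaleR_left_mono[of b "c *\<^sub>R x" "inverse c"] by simp
  then have "inverse c *\<^sub>R b \<le> g"
    using inf unfolding is_infimum_def by blast
  then show "b \<le> c *\<^sub>R g"
    using c scaleR_left_mono[of "inverse c *\<^sub>R b" g c] by simp
qed

lemma is_infimum_le_add:
  fixes X Y Z :: "'a::ordered_ab_group_add set"
  assumes X: "is_infimum X gx" and Y: "is_infimum Y gy" and Z: "is_infimum Z gz"
    and bound: "\<And>x y. x \<in> X \<Longrightarrow> y \<in> Y \<Longrightarrow> \<exists>z\<in>Z. z \<le> x + y"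
  shows "gz \<le> gx + gy"
proof -
  have below_X: "gz - y \<le> x" if xy: "x \<in> X" "y \<in> Y" for x y
  proof -
    obtain z where "z \<in> Z" "z \<le> x + y" using bound[OF xy] by blast
    then have "gz \<le> x + y" using Z unfolding is_infimum_def by (blast intro: order.trans)
    then show ?thesis by (simp add: diff_le_eq)
  qed
  have "gz - gx \<le> y" if "y \<in> Y" for y
  proof -
    have "gz - y \<le> gx" using X below_X that unfolding is_infimum_def by blast
    then show ?thesis by (simp add: algebra_simps)
  qed
  then have "gz - gx \<le> gy"
    using Y unfolding is_infimum_def by blast
  then show ?thesis by (simp add: algebra_simps)
qed

lemma gm_set_scaleR_left:
  fixes a u :: "'a::real_vector"
  assumes c: "0 < c"
  shows "gm_set ((c * c) *\<^sub>R a) u = scaleR c ` gm_set a u"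
proof (intro equalityI subsetI)
  fix x assume "x \<in> gm_set ((c * c) *\<^sub>R a) u"
  then obtain \<theta> where "0 < \<theta>" "x = \<theta> *\<^sub>R (c * c) *\<^sub>R a + inverse \<theta> *\<^sub>R u"
    unfolding gm_set_def by blast
  moreover have "\<dots> = c *\<^sub>R ((\<theta> * c) *\<^sub>R a + inverse (\<theta> * c) *\<^sub>R u)"
    using c by (simp add: scaleR_add_right field_simps)
  moreover have "(\<theta> * c) *\<^sub>R a + inverse (\<theta> * c) *\<^sub>R u \<in> gm_set a u"
    unfolding gm_set_def using c \<open>0 < \<theta>\<close> by (intro CollectI exI[of _ "\<theta> * c"]) simp
  ultimately show "x \<in> scaleR c ` gm_set a u" by blast
next
  fix x assume "x \<in> scaleR c ` gm_set a u"
  then obtain \<theta> where "0 < \<theta>" "x = c *\<^sub>R (\<theta> *\<^sub>R a + inverse \<theta> *\<^sub>R u)"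
    unfolding gm_set_def by blast
  moreover have "\<dots> = (\<theta> / c) *\<^sub>R (c * c) *\<^sub>R a + inverse (\<theta> / c) *\<^sub>R u"
    using c by (simp add: scaleR_add_right field_simps)
  ultimately show "x \<in> gm_set ((c * c) *\<^sub>R a) u"
    unfolding gm_set_def using c by (intro CollectI exI[of _ "\<theta> / c"]) simp
qed

lemma gm_set_nonneg:
  fixes a u :: "'a::ordered_real_vector"
  assumes "0 \<le> a" "0 \<le> u" "x \<in> gm_set a u"
  shows "0 \<le> x"
  using assms unfolding gm_set_def by (auto intro!: add_nonneg_nonneg scaleR_nonneg_nonneg)

lemma is_infimum_gm_set_zero_left:
  fixes u :: "'f::{ordered_real_vector, lattice}"
  assumes arch: "archimedean_vl TYPE('f)" and u: "0 \<le> u"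
  shows "is_infimum (gm_set 0 u) 0"
  unfolding is_infimum_def
proof (intro conjI allI impI ballI)
  show "0 \<le> x" if "x \<in> gm_set 0 u" for x
    using gm_set_nonneg[OF order.refl u that] .
next
  fix b :: 'f assume lb: "\<forall>x\<in>gm_set 0 u. b \<le> x"
  have "real n *\<^sub>R sup b 0 \<le> u" for n :: nat
  proof (cases "n = 0")
    case False
    then have n: "0 < real n" by simp
    have "inverse (real n) *\<^sub>R u \<in> gm_set 0 u"
      unfolding gm_set_def using n by force
    then have "sup b 0 \<le> inverse (real n) *\<^sub>R u"
      using lb u by (simp add: scaleR_nonneg_nonneg)
    then have "real n *\<^sub>R sup b 0 \<le> real n *\<^sub>R (inverse (real n) *\<^sub>R u)"
      by (rule scaleR_left_mono) simp
    then show ?thesis using n by simp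
  qed (use u in simp)
  then have "sup b 0 = 0"
    using arch u unfolding archimedean_vl_def by (meson sup_ge2)
  then show "b \<le> 0" by (metis sup_ge1)
qed

lemma gmean_eq_half_infimum:
  assumes "is_infimum (gm_set a u) g"
  shows "a \<boxtimes> u = inverse 2 *\<^sub>R g"
  unfolding gmean_def using assms by (metis is_infimum_unique the_equality)

lemma is_infimum_gm_set_gmean:
  fixes a u :: "'f::{ordered_real_vector, lattice}"
  assumes "geometric_mean_closed TYPE('f)" "0 \<le> a" "0 \<le> u"
  shows "is_infimum (gm_set a u) (2 *\<^sub>R (a \<boxtimes> u))"
proof -
  obtain g where "is_infimum (gm_set a u) g"
    using assms unfolding geometric_mean_closed_def by blast
  then show ?thesis using gmean_eq_half_infimum by fastforce
qed

lemma gmean_nonneg: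
  fixes a u :: "'f::{ordered_real_vector, lattice}"
  assumes "geometric_mean_closed TYPE('f)" "0 \<le> a" "0 \<le> u"
  shows "0 \<le> a \<boxtimes> u"
proof -
  have "0 \<le> 2 *\<^sub>R (a \<boxtimes> u)"
    using is_infimum_gm_set_gmean[OF assms] gm_set_nonneg[OF assms(2,3)]
    unfolding is_infimum_def by blast
  then show ?thesis
    using scaleR_nonneg_nonneg[of "inverse 2" "2 *\<^sub>R (a \<boxtimes> u)"] by simp
qed

lemma gmean_scaleR_left:
  fixes a u :: "'f::{ordered_real_vector, lattice}"
  assumes "archimedean_vl TYPE('f)" "geometric_mean_closed TYPE('f)" "0 \<le> a" "0 \<le> u"
  shows "((c * c) *\<^sub>R a) \<boxtimes> u = \<bar>c\<bar> *\<^sub>R (a \<boxtimes> u)"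
proof (cases "c = 0")
  case True
  then show ?thesis
    using gmean_eq_half_infimum[OF is_infimum_gm_set_zero_left[OF assms(1,4)]] by simp
next
  case False
  then have "gm_set ((c * c) *\<^sub>R a) u = scaleR \<bar>c\<bar> ` gm_set a u"
    using gm_set_scaleR_left[of "\<bar>c\<bar>" a u] by (simp add: abs_mult_self_eq)
  then have "is_infimum (gm_set ((c * c) *\<^sub>R a) u) (\<bar>c\<bar> *\<^sub>R 2 *\<^sub>R (a \<boxtimes> u))"
    using is_infimum_scaleR[OF is_infimum_gm_set_gmean[OF assms(2-4)], of "\<bar>c\<bar>"] False
    by simp
  then show ?thesis
    using gmean_eq_half_infimum by fastforce
qed

text \<open>With \<open>p = st/(s+t)\<close> one has \<open>s - p = s\<^sup>2/(s+t)\<close>, \<open>t - p = t\<^sup>2/(s+t)\<close> and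
  \<open>p\<^sup>-\<^sup>1 = s\<^sup>-\<^sup>1 + t\<^sup>-\<^sup>1\<close>, so the right-hand side minus the left-hand side is
  \<open>(s\<^sup>2a + t\<^sup>2b - 2stc)/(s+t)\<close>.\<close>

lemma gm_set_add_bound:
  fixes a b c u :: "'a::ordered_real_vector"
  assumes s: "0 < s" and t: "0 < t"
    and pos: "0 \<le> (s * s) *\<^sub>R a + (t * t) *\<^sub>R b - (2 * s * t) *\<^sub>R c"
  defines "p \<equiv> s * t / (s + t)"
  shows "p *\<^sub>R (a + b + 2 *\<^sub>R c) + inverse p *\<^sub>R u
    \<le> (s *\<^sub>R a + inverse s *\<^sub>R u) + (t *\<^sub>R b + inverse t *\<^sub>R u)"
proof -
  have coeffs: "inverse (s + t) * (s * s) = s - p" "inverse (s + t) * (t * t) = t - p"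
    "inverse (s + t) * (2 * s * t) = 2 * p"
    and inv_p: "inverse p = inverse s + inverse t"
    using s t unfolding p_def by (simp_all add: field_simps)
  have "0 \<le> inverse (s + t) *\<^sub>R ((s * s) *\<^sub>R a + (t * t) *\<^sub>R b - (2 * s * t) *\<^sub>R c)"
    using s t pos by (simp add: scaleR_nonneg_nonneg)
  also have "\<dots> = (s - p) *\<^sub>R a + (t - p) *\<^sub>R b - (2 * p) *\<^sub>R c"
    by (simp only: scaleR_diff_right scaleR_add_right scaleR_scaleR coeffs)
  also have "\<dots> = (s *\<^sub>R a + inverse s *\<^sub>R u) + (t *\<^sub>R b + inverse t *\<^sub>R u)
        - (p *\<^sub>R (a + b + 2 *\<^sub>R c) + inverse p *\<^sub>R u)"
    unfolding inv_p by (simp add: algebra_simps)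
  finally show ?thesis by simp
qed

lemma gmean_add_le:
  fixes a b c u :: "'f::{ordered_real_vector, lattice}"
  assumes gm: "geometric_mean_closed TYPE('f)"
    and nonneg: "0 \<le> a" "0 \<le> b" "0 \<le> a + b + 2 *\<^sub>R c" "0 \<le> u"
    and pos: "\<And>s t. 0 < s \<Longrightarrow> 0 < t \<Longrightarrow> 0 \<le> (s * s) *\<^sub>R a + (t * t) *\<^sub>R b - (2 * s * t) *\<^sub>R c"
  shows "(a + b + 2 *\<^sub>R c) \<boxtimes> u \<le> a \<boxtimes> u + b \<boxtimes> u"
proof -
  have "2 *\<^sub>R ((a + b + 2 *\<^sub>R c) \<boxtimes> u) \<le> 2 *\<^sub>R (a \<boxtimes> u) + 2 *\<^sub>R (b \<boxtimes> u)"
  proof (rule is_infimum_le_add[OF is_infimum_gm_set_gmean[OF gm nonneg(1,4)]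
        is_infimum_gm_set_gmean[OF gm nonneg(2,4)] is_infimum_gm_set_gmean[OF gm nonneg(3,4)]])
    fix x y assume "x \<in> gm_set a u" "y \<in> gm_set b u"
    then obtain s t :: real where "0 < s" "x = s *\<^sub>R a + inverse s *\<^sub>R u"
      and "0 < t" "y = t *\<^sub>R b + inverse t *\<^sub>R u"
      unfolding gm_set_def by blast
    moreover have "0 < s * t / (s + t)" using \<open>0 < s\<close> \<open>0 < t\<close> by simp
    ultimately show "\<exists>z\<in>gm_set (a + b + 2 *\<^sub>R c) u. z \<le> x + y"
      using gm_set_add_bound[OF _ _ pos] unfolding gm_set_def by blast
  qed
  then have "inverse 2 *\<^sub>R (2 *\<^sub>R ((a + b + 2 *\<^sub>R c) \<boxtimes> u))
      \<le> inverse 2 *\<^sub>R (2 *\<^sub>R (a \<boxtimes> u) + 2 *\<^sub>R (b \<boxtimes> u))"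
    by (rule scaleR_left_mono) simp
  then show ?thesis by (simp add: scaleR_add_right)
qed

lemma vector_semi_inner_productD:
  assumes "vector_semi_inner_product T"
  shows "T (x + y) z = T x z + T y z" "T x (y + z) = T x y + T x z"
    "T (c *\<^sub>R x) y = c *\<^sub>R T x y" "T x (c *\<^sub>R y) = c *\<^sub>R T x y"
    "T y x = T x y" "0 \<le> T x x"
  using assms unfolding vector_semi_inner_product_def by metis+

lemma vector_semi_inner_product_diag_lincomb:
  assumes "vector_semi_inner_product T"
  shows "T (s *\<^sub>R x + t *\<^sub>R y) (s *\<^sub>R x + t *\<^sub>R y)
    = (s * s) *\<^sub>R T x x + (t * t) *\<^sub>R T y y + (2 * s * t) *\<^sub>R T x y"
  using vector_semi_inner_productD[OF assms]
  by (simp add: scaleR_2 algebra_simps flip: scaleR_add_left)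

theorem theorem3p3:
  fixes T :: "'v::real_vector \<Rightarrow> 'v \<Rightarrow> 'f::{ordered_real_vector, lattice}"
    and u :: 'f
  assumes "archimedean_vl TYPE('f)"
    and "geometric_mean_closed TYPE('f)"
    and "0 \<le> u"
    and "vector_semi_inner_product T"
  shows "(\<forall>x. 0 \<le> T x x \<boxtimes> u)
     \<and> (\<forall>x (\<alpha>::real). T (\<alpha> *\<^sub>R x) (\<alpha> *\<^sub>R x) \<boxtimes> u = \<bar>\<alpha>\<bar> *\<^sub>R (T x x \<boxtimes> u))
     \<and> (\<forall>x y. T (x + y) (x + y) \<boxtimes> u \<le> T x x \<boxtimes> u + T y y \<boxtimes> u)"
proof (intro conjI allI)
  note T = vector_semi_inner_productD[OF assms(4)]
  note T_lincomb = vector_semi_inner_product_diag_lincomb[OF assms(4)]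
  show "0 \<le> T x x \<boxtimes> u" for x
    using gmean_nonneg[OF assms(2) T(6) assms(3)] .
  show "T (\<alpha> *\<^sub>R x) (\<alpha> *\<^sub>R x) \<boxtimes> u = \<bar>\<alpha>\<bar> *\<^sub>R (T x x \<boxtimes> u)" for x \<alpha>
    using gmean_scaleR_left[OF assms(1,2) T(6) assms(3)] T(3,4) by simp
  show "T (x + y) (x + y) \<boxtimes> u \<le> T x x \<boxtimes> u + T y y \<boxtimes> u" for x y
  proof -
    have "T (x + y) (x + y) = T x x + T y y + 2 *\<^sub>R T x y"
      using T_lincomb[of 1 x 1 y] by simp
    moreover have "0 \<le> (s * s) *\<^sub>R T x x + (t * t) *\<^sub>R T y y - (2 * s * t) *\<^sub>R T x y" for s t
      using T(6)[of "s *\<^sub>R x + (- t) *\<^sub>R y"] T_lincomb[of s x "- t" y] by simp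
    ultimately show ?thesis
      using gmean_add_le[OF assms(2) T(6) T(6) _ assms(3)] T(6)[of "x + y"] by simp
  qed
qed

end
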